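(* Consider two agents with combination matrix $A=\begin{bmatrix}a&1-a\\1-a&a\end{bmatrix}$, $a\in(0,1)$, so $p=[0.5;0.5]$, $P=0.5I_2$. Let $\overline{A}=(I_2+A)/2$, let $(P-AP)/2=U\Sigma U^{\mathsf{T}}$ be an eigendecomposition and $V=U\Sigma^{1/2}U^{\mathsf{T}}$. For step-size $\mu$ and $\sigma^2>0$, define $Q_d=\begin{bmatrix}(1-\mu\sigma^2)\overline{A} & -2V\\ (1-\mu\sigma^2)V\overline{A} & \overline{A}\end{bmatrix}\in\mathbb{R}^{4\times4}$. Then $Q_d$ admits the decomposition $Q_d=X\overline{Q}_dX^{-1}$ with $\overline{Q}_d=\begin{bmatrix}1&0\\0&E_d\end{bmatrix}$, $E_d=\begin{bmatrix}1-\mu\sigma^2&0&0\\0&(1-\mu\sigma^2)a&-\sqrt{2-2a}\\0&(1-\mu\sigma^2)a\sqrt{\frac{1-a}{2}}&a\end{bmatrix}$, and $X=[r\ \ X_R]$, $X^{-1}=\begin{bmatrix}\ell^{\mathsf{T}}\\ X_L\end{bmatrix}$ with $X_R\in\mathbb{R}^{4\times3}$, $X_L\in\mathbb{R}^{3\times4}$, $r=\frac12\begin{bmatrix}0\\ \mathds{1}_2\end{bmatrix}\in\mathbb{R}^4$, $\ell=\begin{bmatrix}0\\ \mathds{1}_2\end{bmatrix}\in\mathbb{R}^4$ (here $0\in\mathbb{R}^2$).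
   Context: Analytical two-agent mean-square-error example: costs $\frac12(w^{\mathsf{T}}R_{u,k}w-2r_{du,k}^{\mathsf{T}}w)$ with $R_{u,1}=R_{u,2}=\sigma^2I_M$, same step-size $\mu$; the exact diffusion error recursion is $\widetilde{z}_i=(Q_d\otimes I_M)\widetilde{z}_{i-1}$. *)

theory Defs
  imports "Jordan_Normal_Form.Matrix"
begin

definition combA :: "real \<Rightarrow> real mat" where
  "combA a = mat_of_rows_list 2 [[a, 1 - a], [1 - a, a]]"

definition perronP :: "real mat" where
  "perronP = (1/2 :: real) \<cdot>\<^sub>m 1\<^sub>m 2"

definition Abar :: "real \<Rightarrow> real mat" where
  "Abar a = (1/2 :: real) \<cdot>\<^sub>m (1\<^sub>m 2 + combA a)"

definition diag_sqrt :: "real mat \<Rightarrow> real mat" where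
  "diag_sqrt S = mat (dim_row S) (dim_col S) (\<lambda>(i, j). if i = j then sqrt (S $$ (i, i)) else 0)"

definition Qd :: "real \<Rightarrow> real \<Rightarrow> real \<Rightarrow> real mat \<Rightarrow> real mat" where
  "Qd a mu sigma2 V = four_block_mat
      ((1 - mu * sigma2) \<cdot>\<^sub>m Abar a)      ((-2 :: real) \<cdot>\<^sub>m V)
      ((1 - mu * sigma2) \<cdot>\<^sub>m (V * Abar a))  (Abar a)"

definition Ed :: "real \<Rightarrow> real \<Rightarrow> real \<Rightarrow> real mat" where
  "Ed a mu sigma2 = mat_of_rows_list 3
     [[1 - mu * sigma2, 0, 0],
      [0, (1 - mu * sigma2) * a, - sqrt (2 - 2 * a)],
      [0, (1 - mu * sigma2) * a * sqrt ((1 - a) / 2), a]]"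

definition Qbar :: "real \<Rightarrow> real \<Rightarrow> real \<Rightarrow> real mat" where
  "Qbar a mu sigma2 = four_block_mat (1\<^sub>m 1) (0\<^sub>m 1 3) (0\<^sub>m 3 1) (Ed a mu sigma2)"

definition rvec :: "real vec" where
  "rvec = vec_of_list [0, 0, 1/2, 1/2]"

definition lvec :: "real vec" where
  "lvec = vec_of_list [0, 0, 1, 1]"

definition col_cat :: "real vec \<Rightarrow> real mat \<Rightarrow> real mat" where
  "col_cat v M = mat (dim_row M) (Suc (dim_col M))
     (\<lambda>(i, j). if j = 0 then v $ i else M $$ (i, j - 1))"

definition row_cat :: "real vec \<Rightarrow> real mat \<Rightarrow> real mat" where
  "row_cat v M = mat (Suc (dim_row M)) (dim_col M)
     (\<lambda>(i, j). if i = 0 then v $ j else M $$ (i - 1, j))"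

end

theory Submission
  imports Defs
begin

text \<open>With c = (1 - a)/4 the matrix (P - AP)/2 equals c [[1,-1],[-1,1]], and V is a symmetric
  matrix with nonnegative diagonal whose square is that matrix; this forces
  V = w [[1,-1],[-1,1]] with w = sqrt ((1 - a)/8), whatever eigendecomposition was chosen.
  Once V is explicit, Q_d is an explicit 4x4 matrix and the similarity transform
  X = [r X_R] can be written down and checked entrywise: besides r, the columns of X are
  the eigenvector (1,1,0,0)/2 for 1 - mu sigma^2 and the vectors (1,-1,0,0), (0,0,1,-1)
  spanning the subspace on which Q_d acts as the lower 2x2 block of E_d.\<close>

lemma orthogonal_conj_mult:
  fixes U D E :: "'a::comm_ring_1 mat"
  assumes U: "U \<in> carrier_mat n n" and orth: "U\<^sup>T * U = 1\<^sub>m n"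
    and D: "D \<in> carrier_mat n n" and E: "E \<in> carrier_mat n n"
  shows "(U * D * U\<^sup>T) * (U * E * U\<^sup>T) = U * (D * E) * U\<^sup>T"
proof -
  have Ut: "U\<^sup>T \<in> carrier_mat n n" using U by simp
  have "(U * D * U\<^sup>T) * (U * E * U\<^sup>T) = U * D * (U\<^sup>T * U) * E * U\<^sup>T"
    using U Ut D E by (simp add: assoc_mult_mat[of _ n n _ n _ n])
  also have "\<dots> = U * (D * E) * U\<^sup>T"
    using U Ut D E orth by (simp add: assoc_mult_mat[of _ n n _ n _ n])
  finally show ?thesis .
qed

lemma orthogonal_conj_cancel:
  fixes U S :: "'a::comm_ring_1 mat"
  assumes U: "U \<in> carrier_mat n n" and orth: "U\<^sup>T * U = 1\<^sub>m n"
    and S: "S \<in> carrier_mat n n"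
  shows "U\<^sup>T * (U * S * U\<^sup>T) * U = S"
proof -
  have Ut: "U\<^sup>T \<in> carrier_mat n n" using U by simp
  have "U\<^sup>T * (U * S * U\<^sup>T) * U = (U\<^sup>T * U) * S * (U\<^sup>T * U)"
    using U Ut S by (simp add: assoc_mult_mat[of _ n n _ n _ n])
  then show ?thesis using orth S by simp
qed

lemmas mat_of_rows_list_2x2_simps = mat_of_rows_list_def scalar_prod_def less_Suc_eq numeral_2_eq_2

lemma mat_2x2_eta:
  "M \<in> carrier_mat 2 2 \<Longrightarrow>
    M = mat_of_rows_list 2 [[M $$ (0,0), M $$ (0,1)], [M $$ (1,0), M $$ (1,1)]]"
  by (rule eq_matI) (auto simp: mat_of_rows_list_2x2_simps)

lemma mat_2x2_eq_iff:
  "(mat_of_rows_list 2 [[a, b], [c, d]] = mat_of_rows_list 2 [[e, f], [g, h]]) \<longleftrightarrow>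
    a = e \<and> b = f \<and> c = g \<and> d = h"
proof
  assume eq: "mat_of_rows_list 2 [[a, b], [c, d]] = mat_of_rows_list 2 [[e, f], [g, h]]"
  have "mat_of_rows_list 2 [[a, b], [c, d]] $$ (i, j) = mat_of_rows_list 2 [[e, f], [g, h]] $$ (i, j)"
    for i j by (simp only: eq)
  from this[of 0 0] this[of 0 1] this[of 1 0] this[of 1 1]
  show "a = e \<and> b = f \<and> c = g \<and> d = h" by (simp add: mat_of_rows_list_def)
qed simp

lemma times_mat_2x2:
  "mat_of_rows_list 2 [[a, b], [c, d]] * mat_of_rows_list 2 [[e, f], [g, h]] =
    mat_of_rows_list 2 [[a*e + b*g, a*f + b*h], [c*e + d*g, c*f + d*h :: 'a::comm_ring_1]]"
  by (rule eq_matI) (auto simp: mat_of_rows_list_2x2_simps)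

lemma transpose_mat_2x2:
  "(mat_of_rows_list 2 [[a, b], [c, d]])\<^sup>T = mat_of_rows_list 2 [[a, c], [b, d]]"
  by (rule eq_matI) (auto simp: mat_of_rows_list_2x2_simps)

lemma one_mat_2x2: "(1\<^sub>m 2 :: 'a::comm_ring_1 mat) = mat_of_rows_list 2 [[1, 0], [0, 1]]"
  by (rule eq_matI) (auto simp: mat_of_rows_list_2x2_simps)

lemma smult_mat_2x2:
  "(k::'a::comm_ring_1) \<cdot>\<^sub>m mat_of_rows_list 2 [[a, b], [c, d]] =
    mat_of_rows_list 2 [[k*a, k*b], [k*c, k*d]]"
  by (rule eq_matI) (auto simp: mat_of_rows_list_2x2_simps)

lemma plus_mat_2x2:
  "mat_of_rows_list 2 [[a, b], [c, d]] + mat_of_rows_list 2 [[e, f], [g, h]] =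
    mat_of_rows_list 2 [[a + e, b + f], [c + g, d + h :: 'a::comm_ring_1]]"
  by (rule eq_matI) (auto simp: mat_of_rows_list_2x2_simps)

lemma minus_mat_2x2:
  "mat_of_rows_list 2 [[a, b], [c, d]] - mat_of_rows_list 2 [[e, f], [g, h]] =
    mat_of_rows_list 2 [[a - e, b - f], [c - g, d - h :: 'a::comm_ring_1]]"
  by (rule eq_matI) (auto simp: mat_of_rows_list_2x2_simps)

lemma diag_sqrt_2x2:
  "diag_sqrt (mat_of_rows_list 2 [[a, b], [c, d]]) = mat_of_rows_list 2 [[sqrt a, 0], [0, sqrt d]]"
  unfolding diag_sqrt_def by (rule eq_matI) (auto simp: mat_of_rows_list_2x2_simps)

lemmas mat_2x2_arith = times_mat_2x2 transpose_mat_2x2 one_mat_2x2 smult_mat_2x2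
  plus_mat_2x2 minus_mat_2x2 diag_sqrt_2x2 mat_2x2_eq_iff

lemma half_perron_defect_eq:
  "(1/2 :: real) \<cdot>\<^sub>m (perronP - combA a * perronP) =
    mat_of_rows_list 2 [[(1 - a)/4, -((1 - a)/4)], [-((1 - a)/4), (1 - a)/4]]"
  unfolding perronP_def combA_def mat_2x2_arith by (simp add: field_simps)

lemma Abar_eq: "Abar a = mat_of_rows_list 2 [[(1 + a)/2, (1 - a)/2], [(1 - a)/2, (1 + a)/2]]"
  unfolding Abar_def combA_def mat_2x2_arith by (simp add: field_simps)

lemma transpose_conj_rank_one_2x2:
  "(mat_of_rows_list 2 [[u0, u1], [u2, u3]])\<^sup>T * mat_of_rows_list 2 [[c, -c], [-c, c]]
     * mat_of_rows_list 2 [[u0, u1], [u2, u3]] =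
   mat_of_rows_list 2 [[c * (u0 - u2)\<^sup>2, c * (u0 - u2) * (u1 - u3)],
                       [c * (u0 - u2) * (u1 - u3), c * (u1 - u3)\<^sup>2 :: 'a::comm_ring_1]]"
  unfolding mat_2x2_arith by (simp add: power2_eq_square algebra_simps)

lemma orthogonal_conj_diag_2x2:
  "mat_of_rows_list 2 [[u0, u1], [u2, u3]] * mat_of_rows_list 2 [[d0, 0], [0, d1]]
     * (mat_of_rows_list 2 [[u0, u1], [u2, u3]])\<^sup>T =
   mat_of_rows_list 2 [[u0*u0*d0 + u1*u1*d1, u0*u2*d0 + u1*u3*d1],
                       [u0*u2*d0 + u1*u3*d1, u2*u2*d0 + u3*u3*d1 :: 'a::comm_ring_1]]"
  unfolding mat_2x2_arith by (simp add: algebra_simps)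

lemma sqrt_rank_one_2x2_unique:
  fixes p q r c :: real
  assumes p: "0 \<le> p" and r: "0 \<le> r"
    and sq: "mat_of_rows_list 2 [[p, q], [q, r]] * mat_of_rows_list 2 [[p, q], [q, r]] =
             mat_of_rows_list 2 [[c, -c], [-c, c]]"
  shows "p = sqrt (c/2) \<and> q = - p \<and> r = p"
proof -
  have eqs: "p*p + q*q = c" "p*q + q*r = -c" "q*q + r*r = c"
    using sq unfolding mat_2x2_arith by auto
  have "p\<^sup>2 = r\<^sup>2" using eqs by (simp add: power2_eq_square)
  then have pr: "r = p" using p r by (simp add: power2_eq_iff_nonneg)
  have "(p + q) * (p + q) = 0" using eqs pr by (simp add: algebra_simps)
  then have qp: "q = - p" by simp
  have "p\<^sup>2 = c/2" using eqs qp by (simp add: power2_eq_square)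
  then have "p = sqrt (c/2)" using p by (simp add: real_sqrt_unique)
  with pr qp show ?thesis by simp
qed

lemma V_eq:
  fixes a :: real and U Sigma V :: "real mat"
  assumes "a < 1"
    and U: "U \<in> carrier_mat 2 2" and orth: "U\<^sup>T * U = 1\<^sub>m 2"
    and Sigma: "Sigma \<in> carrier_mat 2 2" and "diagonal_mat Sigma"
    and eig: "(1/2 :: real) \<cdot>\<^sub>m (perronP - combA a * perronP) = U * Sigma * U\<^sup>T"
    and V: "V = U * diag_sqrt Sigma * U\<^sup>T"
  defines "w \<equiv> sqrt ((1 - a)/8)"
  shows "V = mat_of_rows_list 2 [[w, -w], [-w, w]]"
proof -
  define c where "c = (1 - a)/4"
  have c: "0 \<le> c" using \<open>a < 1\<close> by (simp add: c_def)
  define M where "M = mat_of_rows_list 2 [[c, -c], [-c, c]]"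
  have M_eq: "U * Sigma * U\<^sup>T = M"
    using eig half_perron_defect_eq by (simp add: c_def M_def)
  obtain u0 u1 u2 u3 where U_eq: "U = mat_of_rows_list 2 [[u0, u1], [u2, u3]]"
    using mat_2x2_eta[OF U] by blast
  have "Sigma $$ (0, 1) = 0" "Sigma $$ (1, 0) = 0"
    using \<open>diagonal_mat Sigma\<close> Sigma unfolding diagonal_mat_def by auto
  then obtain s0 s1 where Sigma_eq: "Sigma = mat_of_rows_list 2 [[s0, 0], [0, s1]]"
    using mat_2x2_eta[OF Sigma] by metis
  have "Sigma = U\<^sup>T * M * U"
    using orthogonal_conj_cancel[OF U orth Sigma] by (simp add: M_eq)
  then have "s0 = c * (u0 - u2)\<^sup>2 \<and> s1 = c * (u1 - u3)\<^sup>2"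
    unfolding Sigma_eq U_eq M_def transpose_conj_rank_one_2x2 mat_2x2_eq_iff by simp
  then have s: "0 \<le> s0" "0 \<le> s1" using c by simp_all
  then have root: "diag_sqrt Sigma * diag_sqrt Sigma = Sigma"
    unfolding Sigma_eq diag_sqrt_2x2 times_mat_2x2 by simp
  have D: "diag_sqrt Sigma \<in> carrier_mat 2 2"
    using Sigma unfolding diag_sqrt_def by auto
  have VV: "V * V = M"
    unfolding V orthogonal_conj_mult[OF U orth D D] root M_eq ..
  define p where "p = u0*u0*sqrt s0 + u1*u1*sqrt s1"
  define q where "q = u0*u2*sqrt s0 + u1*u3*sqrt s1"
  define r where "r = u2*u2*sqrt s0 + u3*u3*sqrt s1"
  have V_pqr: "V = mat_of_rows_list 2 [[p, q], [q, r]]"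
    unfolding V U_eq Sigma_eq diag_sqrt_2x2 orthogonal_conj_diag_2x2 p_def q_def r_def ..
  have "0 \<le> p" "0 \<le> r" using s by (simp_all add: p_def r_def)
  then have "p = sqrt (c/2) \<and> q = - p \<and> r = p"
    using sqrt_rank_one_2x2_unique VV unfolding V_pqr M_def by blast
  then show ?thesis
    unfolding V_pqr w_def c_def by simp
qed

lemmas mat_of_rows_list_4x4_simps = mat_of_rows_list_def scalar_prod_def less_Suc_eq numeral_eq_Suc

lemma Qd_eq:
  "Qd a mu s (mat_of_rows_list 2 [[w, -w], [-w, w]]) = mat_of_rows_list 4
     [[(1 - mu*s)*(1 + a)/2, (1 - mu*s)*(1 - a)/2, -2*w, 2*w],
      [(1 - mu*s)*(1 - a)/2, (1 - mu*s)*(1 + a)/2, 2*w, -2*w],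
      [(1 - mu*s)*a*w, -(1 - mu*s)*a*w, (1 + a)/2, (1 - a)/2],
      [-(1 - mu*s)*a*w, (1 - mu*s)*a*w, (1 - a)/2, (1 + a)/2]]"
  unfolding Qd_def Abar_eq mat_2x2_arith
  by (rule eq_matI) (auto simp: mat_of_rows_list_4x4_simps four_block_mat_def field_simps)

lemma Qbar_eq:
  assumes "sqrt (2 - 2*a) = 4*w" and "sqrt ((1 - a)/2) = 2*w"
  shows "Qbar a mu s = mat_of_rows_list 4
     [[1, 0, 0, 0], [0, 1 - mu*s, 0, 0], [0, 0, (1 - mu*s)*a, -4*w], [0, 0, (1 - mu*s)*a*(2*w), a]]"
  unfolding Qbar_def Ed_def assms
  by (rule eq_matI) (auto simp: mat_of_rows_list_4x4_simps four_block_mat_def)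

definition XR :: "real mat" where
  "XR = mat_of_rows_list 3 [[1/2, 1, 0], [1/2, -1, 0], [0, 0, 1], [0, 0, -1]]"

definition XL :: "real mat" where
  "XL = mat_of_rows_list 4 [[1, 1, 0, 0], [1/2, -1/2, 0, 0], [0, 0, 1/2, -1/2]]"

lemma col_cat_rvec_XR:
  "col_cat rvec XR = mat_of_rows_list 4
     [[0, 1/2, 1, 0], [0, 1/2, -1, 0], [1/2, 0, 0, 1], [1/2, 0, 0, -1]]"
  unfolding col_cat_def XR_def rvec_def
  by (rule eq_matI) (auto simp: mat_of_rows_list_4x4_simps)

lemma row_cat_lvec_XL:
  "row_cat lvec XL = mat_of_rows_list 4
     [[0, 0, 1, 1], [1, 1, 0, 0], [1/2, -1/2, 0, 0], [0, 0, 1/2, -1/2]]"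
  unfolding row_cat_def XL_def lvec_def
  by (rule eq_matI) (auto simp: mat_of_rows_list_4x4_simps)

lemma X_mult_Xinv: "col_cat rvec XR * row_cat lvec XL = 1\<^sub>m 4"
  unfolding col_cat_rvec_XR row_cat_lvec_XL
  by (rule eq_matI) (auto simp: mat_of_rows_list_4x4_simps)

lemma Xinv_mult_X: "row_cat lvec XL * col_cat rvec XR = 1\<^sub>m 4"
  unfolding col_cat_rvec_XR row_cat_lvec_XL
  by (rule eq_matI) (auto simp: mat_of_rows_list_4x4_simps)

lemma Qd_similar_Qbar:
  assumes "sqrt (2 - 2*a) = 4*w" and "sqrt ((1 - a)/2) = 2*w"
  shows "Qd a mu s (mat_of_rows_list 2 [[w, -w], [-w, w]]) =
    col_cat rvec XR * Qbar a mu s * row_cat lvec XL"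
  unfolding Qd_eq col_cat_rvec_XR row_cat_lvec_XL Qbar_eq[OF assms]
  by (rule eq_matI) (auto simp: mat_of_rows_list_4x4_simps field_simps)

theorem lemma5:
  fixes a mu sigma2 :: real and U Sigma V :: "real mat"
  assumes "0 < a" and "a < 1" and "0 < sigma2"
    and "U \<in> carrier_mat 2 2" and "U * U\<^sup>T = 1\<^sub>m 2" and "U\<^sup>T * U = 1\<^sub>m 2"
    and "Sigma \<in> carrier_mat 2 2" and "diagonal_mat Sigma"
    and "(1/2 :: real) \<cdot>\<^sub>m (perronP - combA a * perronP) = U * Sigma * U\<^sup>T"
    and "V = U * diag_sqrt Sigma * U\<^sup>T"
  shows "\<exists>XR XL. XR \<in> carrier_mat 4 3 \<and> XL \<in> carrier_mat 3 4 \<and>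
           col_cat rvec XR * row_cat lvec XL = 1\<^sub>m 4 \<and>
           row_cat lvec XL * col_cat rvec XR = 1\<^sub>m 4 \<and>
           Qd a mu sigma2 V = col_cat rvec XR * Qbar a mu sigma2 * row_cat lvec XL"
proof -
  define w where "w = sqrt ((1 - a)/8)"
  have V: "V = mat_of_rows_list 2 [[w, -w], [-w, w]]"
    using V_eq[OF assms(2,4,6-10)] unfolding w_def .
  have "sqrt ((1 - a)/2) = sqrt 4 * w"
    unfolding w_def real_sqrt_mult[symmetric] by simp
  then have half: "sqrt ((1 - a)/2) = 2*w" by simp
  have "sqrt (2 - 2*a) = sqrt 16 * w"
    unfolding w_def real_sqrt_mult[symmetric] by (simp add: algebra_simps)
  then have double: "sqrt (2 - 2*a) = 4*w" by simp
  have "XR \<in> carrier_mat 4 3" "XL \<in> carrier_mat 3 4"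
    by (simp_all add: XR_def XL_def mat_of_rows_list_def numeral_eq_Suc)
  then show ?thesis
    using X_mult_Xinv Xinv_mult_X Qd_similar_Qbar[OF double half] unfolding V by blast
qed

end
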